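(* Let $M$ be a commutative semiring. Then $M$ is a semifield if and only if for every non-constant fuzzy ideal $\mu$ of $M$ one has $\mu(x)=\mu(y)<\mu(0)$ for all $x,y\in M\setminus\{0\}$.
   Context: Semirings are taken in the sense of Golan: $(M,+)$ is a commutative monoid with identity $0$, $(M,\cdot)$ is a monoid with identity $1\neq 0$, multiplication distributes over addition, and $0x=x0=0$. A semifield is a commutative semiring in which every nonzero element has a multiplicative inverse. A fuzzy ideal of $M$ is a map $\mu:M\to[0,1]$, not identically $0$, with $\mu(x+y)\ge\min[\mu(x),\mu(y)]$, $\mu(xy)\ge\mu(y)$ and $\mu(xy)\ge\mu(x)$ for all $x,y\in M$. Non-constant means not constant on $M$. *)

theory Defs
  imports Complex_Main
begin

text \<open>Semirings in the sense of Golan, commutative: the type class comm_semiring_1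
(commutative monoid (+,0), commutative monoid (*,1), distributivity, 0 absorbing,
and 0 \<noteq> 1).\<close>

definition semifield :: "'a::comm_semiring_1 itself \<Rightarrow> bool" where
  "semifield _ \<longleftrightarrow> (\<forall>x::'a. x \<noteq> 0 \<longrightarrow> (\<exists>y. x * y = 1))"

definition fuzzy_ideal :: "('a::comm_semiring_1 \<Rightarrow> real) \<Rightarrow> bool" where
  "fuzzy_ideal \<mu> \<longleftrightarrow>
     (\<forall>x. 0 \<le> \<mu> x \<and> \<mu> x \<le> 1) \<and>
     (\<exists>x. \<mu> x \<noteq> 0) \<and>
     (\<forall>x y. \<mu> (x + y) \<ge> min (\<mu> x) (\<mu> y)) \<and>
     (\<forall>x y. \<mu> (x * y) \<ge> \<mu> y) \<and>
     (\<forall>x y. \<mu> (x * y) \<ge> \<mu> x)"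

definition non_constant :: "('a \<Rightarrow> real) \<Rightarrow> bool" where
  "non_constant \<mu> \<longleftrightarrow> (\<exists>x y. \<mu> x \<noteq> \<mu> y)"

end

theory Submission
  imports Defs
begin

text \<open>A fuzzy ideal is monotone along divisibility, hence constant on the units and maximal
at 0. In a semifield every nonzero element is a unit, so a fuzzy ideal takes one value off 0
and, unless constant, a strictly larger one at 0. Conversely, if some nonzero x is not a unit,
the characteristic function of the principal ideal xM is a non-constant fuzzy ideal separating
x from 1.\<close>

lemma semifield_iff_dvd_one:
  "semifield TYPE('a::comm_semiring_1) \<longleftrightarrow> (\<forall>x::'a. x \<noteq> 0 \<longrightarrow> x dvd 1)"
  unfolding semifield_def dvd_def by metis

lemma fuzzy_ideal_dvd_mono:
  assumes "fuzzy_ideal \<mu>" and "a dvd b"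
  shows "\<mu> a \<le> \<mu> b"
proof -
  obtain k where "b = a * k" using \<open>a dvd b\<close> by blast
  then show ?thesis using assms(1) unfolding fuzzy_ideal_def by simp
qed

lemma fuzzy_ideal_le_zero:
  assumes "fuzzy_ideal \<mu>"
  shows "\<mu> a \<le> \<mu> 0"
  using fuzzy_ideal_dvd_mono[OF assms dvd_0_right] .

lemma fuzzy_ideal_unit_eq_one:
  assumes "fuzzy_ideal \<mu>" and "a dvd 1"
  shows "\<mu> a = \<mu> 1"
  using fuzzy_ideal_dvd_mono[OF assms(1) assms(2)] fuzzy_ideal_dvd_mono[OF assms(1) one_dvd]
  by (rule order_antisym)

lemma fuzzy_ideal_one_less_zero:
  assumes "fuzzy_ideal \<mu>" and "non_constant \<mu>"
    and units: "\<And>a. a \<noteq> 0 \<Longrightarrow> \<mu> a = \<mu> 1"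
  shows "\<mu> 1 < \<mu> 0"
proof -
  have "\<mu> 1 \<noteq> \<mu> 0"
  proof
    assume one_zero: "\<mu> 1 = \<mu> 0"
    have const: "\<mu> a = \<mu> 0" for a
    proof (cases "a = 0")
      case False
      then show ?thesis using units one_zero by simp
    qed simp
    obtain x y where "\<mu> x \<noteq> \<mu> y"
      using \<open>non_constant \<mu>\<close> unfolding non_constant_def by blast
    then show False
      using const[of x] const[of y] by simp
  qed
  then show ?thesis
    using fuzzy_ideal_le_zero[OF assms(1), of 1] by simp
qed

lemma fuzzy_ideal_principal:
  fixes x :: "'a::comm_semiring_1"
  shows "fuzzy_ideal (\<lambda>z. of_bool (x dvd z))"
  unfolding fuzzy_ideal_def
proof (intro conjI allI)
  show "\<exists>z. of_bool (x dvd z) \<noteq> (0::real)"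
    by (rule exI[of _ 0]) simp
qed (simp_all add: dvd_add dvd_mult dvd_mult2)

theorem theorem3p9:
  shows "semifield TYPE('a::comm_semiring_1) \<longleftrightarrow>
    (\<forall>\<mu> :: 'a \<Rightarrow> real. fuzzy_ideal \<mu> \<and> non_constant \<mu> \<longrightarrow>
       (\<forall>x y. x \<noteq> 0 \<and> y \<noteq> 0 \<longrightarrow> \<mu> x = \<mu> y \<and> \<mu> y < \<mu> 0))"
  (is "_ \<longleftrightarrow> ?fuzzy")
proof
  assume "semifield TYPE('a)"
  then have units: "\<mu> a = \<mu> 1" if "fuzzy_ideal \<mu>" "a \<noteq> 0" for \<mu> :: "'a \<Rightarrow> real" and a
    using that fuzzy_ideal_unit_eq_one by (auto simp: semifield_iff_dvd_one)
  show ?fuzzy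
  proof (intro allI impI)
    fix \<mu> :: "'a \<Rightarrow> real" and x y :: 'a
    assume "fuzzy_ideal \<mu> \<and> non_constant \<mu>" and "x \<noteq> 0 \<and> y \<noteq> 0"
    then have "\<mu> x = \<mu> 1" "\<mu> y = \<mu> 1" "\<mu> 1 < \<mu> 0"
      using units[of \<mu> x] units[of \<mu> y] fuzzy_ideal_one_less_zero[of \<mu>] units[of \<mu>] by blast+
    then show "\<mu> x = \<mu> y \<and> \<mu> y < \<mu> 0"
      by simp
  qed
next
  assume fuzzy: ?fuzzy
  show "semifield TYPE('a)"
    unfolding semifield_iff_dvd_one
  proof (intro allI impI)
    fix x :: 'a
    assume "x \<noteq> 0"
    define \<mu> :: "'a \<Rightarrow> real" where "\<mu> z = of_bool (x dvd z)" for z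
    show "x dvd 1"
    proof (rule ccontr)
      assume "\<not> x dvd 1"
      then have "non_constant \<mu>"
        unfolding non_constant_def \<mu>_def by (metis dvd_0_right of_bool_eq_iff)
      moreover have "fuzzy_ideal \<mu>"
        unfolding \<mu>_def by (rule fuzzy_ideal_principal)
      ultimately have "\<mu> x = \<mu> 1"
        using fuzzy \<open>x \<noteq> 0\<close> one_neq_zero by blast
      with \<open>\<not> x dvd 1\<close> show False
        unfolding \<mu>_def by simp
    qed
  qed
qed

end
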